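(* Assume $G$ is simply laced. Let $\varpi$ be a minuscule fundamental weight, $\bar\phi\in W/W_{P_\varpi}$, $\phi$ the minimal length element of $\bar\phi$, $\phi=s_{\gamma_1}\cdots s_{\gamma_n}$ a reduced expression with simple roots $\gamma_k$, $\beta_k=i(\gamma_k)$, $\alpha_1=\beta_1$ and $\alpha_k=s_{\beta_1}\cdots s_{\beta_{k-1}}(\beta_k)$. Let $\beta$ be the unique simple root with $\langle\beta^\vee,i(\varpi)\rangle=1$. Then for every $i\in[1,n]$, $$\sum_{k\in[i+1,n],\ \beta_k=\beta}\langle\alpha_i^\vee,\alpha_k\rangle=\begin{cases}1 & \text{if }\beta_i\neq\beta,\\ 0&\text{if }\beta_i=\beta.\end{cases}$$
   Context: $G$ is a semisimple algebraic group with maximal torus $T$, Borel subgroup $B$, simple roots $S$, Weyl group $W$ with longest element $w_0$; $s_\alpha$ is the reflection and $\alpha^\vee$ the coroot of a root $\alpha$. The Weyl involution $i$ sends a simple root $\gamma$ to $-w_0(\gamma)$ and a fundamental weight $\varpi$ to $-w_0(\varpi)$. A fundamental weight $\varpi$ is minuscule if $\langle\alpha^\vee,\varpi\rangle\le1$ for all positive roots $\alpha$; $P_\varpi$ is the associated maximal parabolic subgroup and $W_{P_\varpi}$ its Weyl group. *)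

theory Defs
  imports "HOL-Analysis.Analysis"
begin

text \<open>The root system of the semisimple group G is modelled
  as a reduced crystallographic root system R spanning a Euclidean space, with a base S
  (simple roots). Weyl group elements are linear maps of the space.\<close>

definition copair :: "'a::real_inner \<Rightarrow> 'a \<Rightarrow> real" where
  "copair \<alpha> v = 2 * (v \<bullet> \<alpha>) / (\<alpha> \<bullet> \<alpha>)"

definition refl :: "'a::real_inner \<Rightarrow> 'a \<Rightarrow> 'a" where
  "refl \<alpha> v = v - copair \<alpha> v *\<^sub>R \<alpha>"

definition root_system :: "'a::euclidean_space set \<Rightarrow> bool" where
  "root_system R \<longleftrightarrow> finite R \<and> 0 \<notin> R \<and> span R = UNIV \<and>
     (\<forall>\<alpha>\<in>R. refl \<alpha> ` R \<subseteq> R) \<and>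
     (\<forall>\<alpha>\<in>R. \<forall>\<beta>\<in>R. copair \<alpha> \<beta> \<in> \<int>) \<and>
     (\<forall>\<alpha>\<in>R. \<forall>c. c *\<^sub>R \<alpha> \<in> R \<longrightarrow> c = 1 \<or> c = -1)"

definition simply_laced :: "'a::euclidean_space set \<Rightarrow> bool" where
  "simply_laced R \<longleftrightarrow> (\<forall>\<alpha>\<in>R. \<forall>\<beta>\<in>R. \<beta> \<noteq> \<alpha> \<and> \<beta> \<noteq> -\<alpha> \<longrightarrow> copair \<alpha> \<beta> \<in> {-1, 0, 1})"

definition pos_roots :: "'a::euclidean_space set \<Rightarrow> 'a set \<Rightarrow> 'a set" where
  "pos_roots R S = {\<alpha>\<in>R. \<exists>c::'a \<Rightarrow> nat. \<alpha> = (\<Sum>s\<in>S. real (c s) *\<^sub>R s)}"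

definition is_base :: "'a::euclidean_space set \<Rightarrow> 'a set \<Rightarrow> bool" where
  "is_base R S \<longleftrightarrow> S \<subseteq> R \<and> independent S \<and>
     (\<forall>\<alpha>\<in>R. \<alpha> \<in> pos_roots R S \<or> - \<alpha> \<in> pos_roots R S)"

definition wordprod :: "'a::real_inner list \<Rightarrow> 'a \<Rightarrow> 'a" where
  "wordprod gs = foldr (\<circ>) (map refl gs) id"

definition weyl :: "'a::real_inner set \<Rightarrow> ('a \<Rightarrow> 'a) set" where
  "weyl S = {wordprod gs | gs. set gs \<subseteq> S}"

definition wlen :: "'a::real_inner set \<Rightarrow> ('a \<Rightarrow> 'a) \<Rightarrow> nat" where
  "wlen S w = (LEAST n. \<exists>gs. set gs \<subseteq> S \<and> length gs = n \<and> wordprod gs = w)"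

definition longest :: "'a::real_inner set \<Rightarrow> 'a \<Rightarrow> 'a" where
  "longest S = (THE w. w \<in> weyl S \<and> (\<forall>v\<in>weyl S. wlen S v \<le> wlen S w))"

definition weyl_inv :: "'a::real_inner set \<Rightarrow> 'a \<Rightarrow> 'a" where
  "weyl_inv S x = - longest S x"

definition fundamental_weight :: "'a::real_inner set \<Rightarrow> 'a \<Rightarrow> bool" where
  "fundamental_weight S \<omega> \<longleftrightarrow>
     (\<exists>\<gamma>\<in>S. \<forall>\<delta>\<in>S. copair \<delta> \<omega> = (if \<delta> = \<gamma> then 1 else 0))"

definition minuscule :: "'a::euclidean_space set \<Rightarrow> 'a set \<Rightarrow> 'a \<Rightarrow> bool" where
  "minuscule R S \<omega> \<longleftrightarrow> fundamental_weight S \<omega> \<and>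
     (\<forall>\<alpha>\<in>pos_roots R S. copair \<alpha> \<omega> \<le> 1)"

text \<open>Weyl group W_P of the maximal parabolic P_varpi: generated by the simple
  reflections s_gamma with gamma orthogonal (coroot pairing 0) to varpi.\<close>
definition parabolic_weyl :: "'a::real_inner set \<Rightarrow> 'a \<Rightarrow> ('a \<Rightarrow> 'a) set" where
  "parabolic_weyl S \<omega> = weyl {\<gamma>\<in>S. copair \<gamma> \<omega> = 0}"

text \<open>The roots alpha_k = s_{b_1} ... s_{b_(k-1)} (b_k), 1-based index k.\<close>
definition alpha_seq :: "'a::real_inner list \<Rightarrow> nat \<Rightarrow> 'a" where
  "alpha_seq bs k = wordprod (take (k - 1) bs) (bs ! (k - 1))"

end

theory Submission
  imports Defs
begin

text \<open>
  Write \<open>\<phi> = s\<^sub>1 \<cdots> s\<^sub>n\<close> with \<open>s\<^sub>k = s\<^bsub>\<gamma>\<^sub>k\<^esub>\<close>, \<open>W\<^sub>j = s\<^sub>1 \<cdots> s\<^sub>j\<close> and \<open>\<alpha>'\<^sub>k = W\<^bsub>k-1\<^esub> \<gamma>\<^sub>k\<close>.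
  Since \<open>W\<^bsub>k-1\<^esub> \<omega> - W\<^sub>k \<omega> = \<langle>\<gamma>\<^sub>k\<^sup>\<or>, \<omega>\<rangle> \<alpha>'\<^sub>k\<close> and \<open>\<langle>\<gamma>\<^sub>k\<^sup>\<or>, \<omega>\<rangle>\<close> is 1 for the simple
  root \<open>m\<close> of \<open>\<omega>\<close> and 0 otherwise, the sum over \<open>k > i\<close> with \<open>\<gamma>\<^sub>k = m\<close> of
  \<open>\<langle>\<alpha>'\<^sub>i\<^sup>\<or>, \<alpha>'\<^sub>k\<rangle>\<close> telescopes to \<open>\<langle>\<alpha>'\<^sub>i\<^sup>\<or>, W\<^sub>i \<omega> - \<phi> \<omega>\<rangle> = \<langle>\<gamma>\<^sub>i\<^sup>\<or>, Q \<omega>\<rangle> - \<langle>\<gamma>\<^sub>i\<^sup>\<or>, \<omega>\<rangle>\<close>,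
  where \<open>Q = s\<^bsub>i+1\<^esub> \<cdots> s\<^sub>n\<close>. Reducedness makes \<open>\<delta> = Q\<^sup>-\<^sup>1 \<gamma>\<^sub>i\<close> a positive root, so
  \<open>\<langle>\<gamma>\<^sub>i\<^sup>\<or>, Q \<omega>\<rangle> = \<langle>\<delta>\<^sup>\<or>, \<omega>\<rangle>\<close> is 0 or 1 as \<open>\<omega>\<close> is minuscule. It cannot be 0: then \<open>\<delta>\<close>
  would be a root of the Levi factor of \<open>P\<^sub>\<omega>\<close>, which the minimal coset representative \<open>\<phi>\<close>
  keeps positive, whereas \<open>\<phi> \<delta> = - \<alpha>'\<^sub>i\<close>. Finally \<open>i = - w\<^sub>0\<close> is an isometry permuting
  the simple roots with \<open>\<alpha>\<^sub>k = i(\<alpha>'\<^sub>k)\<close>, which transports this identity to the stated one.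
\<close>

section \<open>Reflections and reduced words\<close>

lemma copair_add: "copair a (x + y) = copair a x + copair a y"
  by (simp add: copair_def inner_add_left add_divide_distrib)

lemma copair_diff: "copair a (x - y) = copair a x - copair a y"
  by (simp add: copair_def inner_diff_left diff_divide_distrib)

lemma copair_scaleR: "copair a (c *\<^sub>R x) = c * copair a x"
  by (simp add: copair_def)

lemma copair_self: "a \<noteq> 0 \<Longrightarrow> copair a a = 2"
  by (simp add: copair_def)

lemma refl_self: "a \<noteq> 0 \<Longrightarrow> refl a a = - a"
  by (simp add: refl_def copair_self scaleR_2)

\<comment> \<open>Division by zero makes \<open>refl 0 = id\<close>, so no lemma about reflections needs \<open>a \<noteq> 0\<close>.\<close>
lemma copair_zero [simp]: "copair 0 v = 0"
  by (simp add: copair_def)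

lemma copair_refl_self: "copair a (refl a x) = - copair a x"
  by (cases "a = 0") (simp_all add: refl_def copair_diff copair_scaleR copair_self)

lemma refl_refl [simp]: "refl a (refl a v) = v"
  using copair_refl_self[of a v] by (simp add: refl_def algebra_simps)

lemma orthogonal_transformation_refl: "orthogonal_transformation (refl a)"
  unfolding orthogonal_transformation_def
proof
  show "linear (refl a)"
    by (rule linearI) (auto simp: refl_def copair_add copair_scaleR algebra_simps)
  show "\<forall>x y. refl a x \<bullet> refl a y = x \<bullet> y"
    by (simp add: refl_def copair_def inner_diff_left inner_diff_right algebra_simps inner_commute)
qed

lemma copair_orthogonal_transformation:
  "orthogonal_transformation f \<Longrightarrow> copair (f a) (f v) = copair a v"
  by (simp add: orthogonal_transformation_def copair_def)

lemma refl_orthogonal_transformation: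
  "orthogonal_transformation f \<Longrightarrow> f (refl a v) = refl (f a) (f v)"
  by (simp add: refl_def copair_orthogonal_transformation linear_diff
      orthogonal_transformation_linear orthogonal_transformation_scaleR)

lemma wordprod_Nil [simp]: "wordprod [] = id"
  by (simp add: wordprod_def)

lemma wordprod_Cons [simp]: "wordprod (a # ws) = refl a \<circ> wordprod ws"
  by (simp add: wordprod_def)

lemma wordprod_append: "wordprod (xs @ ys) = wordprod xs \<circ> wordprod ys"
  by (induct xs) auto

lemma orthogonal_transformation_wordprod: "orthogonal_transformation (wordprod ws)"
  by (induct ws) (auto simp only: wordprod_Nil wordprod_Cons id_def orthogonal_transformation_id
      intro: orthogonal_transformation_compose orthogonal_transformation_refl)

lemma wordprod_rev_wordprod [simp]: "wordprod (rev ws) (wordprod ws v) = v"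
  by (induct ws arbitrary: v) (simp_all add: wordprod_append)

lemma wordprod_wordprod_rev [simp]: "wordprod ws (wordprod (rev ws) v) = v"
  using wordprod_rev_wordprod[of "rev ws"] by simp

lemma wordprod_map:
  "orthogonal_transformation f \<Longrightarrow> wordprod (map f ws) (f v) = f (wordprod ws v)"
  by (induct ws arbitrary: v) (simp_all add: refl_orthogonal_transformation)

lemma alpha_seq_map:
  assumes "orthogonal_transformation f" and "k - 1 < length bs"
  shows "alpha_seq (map f bs) k = f (alpha_seq bs k)"
  using assms by (simp add: alpha_seq_def take_map wordprod_map)

definition reduced_word :: "'a::real_inner set \<Rightarrow> 'a list \<Rightarrow> bool" where
  "reduced_word S ws \<longleftrightarrow> set ws \<subseteq> S \<and> length ws = wlen S (wordprod ws)"

lemma wordprod_in_weyl: "set ws \<subseteq> S \<Longrightarrow> wordprod ws \<in> weyl S"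
  by (auto simp: weyl_def)

lemma wlen_le: "set ws \<subseteq> S \<Longrightarrow> wlen S (wordprod ws) \<le> length ws"
  unfolding wlen_def by (rule Least_le) blast

lemma reduced_word_exists: "w \<in> weyl S \<Longrightarrow> \<exists>ws. reduced_word S ws \<and> wordprod ws = w"
proof -
  assume "w \<in> weyl S"
  then have "\<exists>n ws. set ws \<subseteq> S \<and> length ws = n \<and> wordprod ws = w"
    by (auto simp: weyl_def)
  then have "\<exists>ws. set ws \<subseteq> S \<and> length ws = wlen S w \<and> wordprod ws = w"
    unfolding wlen_def by (rule LeastI_ex)
  then show ?thesis
    by (auto simp: reduced_word_def)
qed

lemma reduced_word_iff:
  "reduced_word S ws \<longleftrightarrow>
     set ws \<subseteq> S \<and> (\<forall>vs. set vs \<subseteq> S \<and> wordprod vs = wordprod ws \<longrightarrow> length ws \<le> length vs)"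
proof (intro iffI conjI allI impI)
  assume "reduced_word S ws"
  then show "set ws \<subseteq> S" and "set vs \<subseteq> S \<and> wordprod vs = wordprod ws \<Longrightarrow> length ws \<le> length vs" for vs
    using wlen_le[of vs S] by (auto simp: reduced_word_def)
next
  assume ws: "set ws \<subseteq> S \<and> (\<forall>vs. set vs \<subseteq> S \<and> wordprod vs = wordprod ws \<longrightarrow> length ws \<le> length vs)"
  then have "wordprod ws \<in> weyl S"
    by (auto simp: weyl_def)
  then obtain vs where "reduced_word S vs" "wordprod vs = wordprod ws"
    using reduced_word_exists by blast
  then have "length ws \<le> wlen S (wordprod ws)"
    using ws by (auto simp: reduced_word_def)
  then show "reduced_word S ws"
    using ws wlen_le[of ws S] by (simp add: reduced_word_def)
qed

lemma reduced_word_infix: "reduced_word S (xs @ ys @ zs) \<Longrightarrow> reduced_word S ys"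
  unfolding reduced_word_iff
proof (intro conjI allI impI)
  assume red: "set (xs @ ys @ zs) \<subseteq> S \<and>
    (\<forall>vs. set vs \<subseteq> S \<and> wordprod vs = wordprod (xs @ ys @ zs) \<longrightarrow> length (xs @ ys @ zs) \<le> length vs)"
  then show "set ys \<subseteq> S" by simp
  fix vs assume "set vs \<subseteq> S \<and> wordprod vs = wordprod ys"
  then have "set (xs @ vs @ zs) \<subseteq> S \<and> wordprod (xs @ vs @ zs) = wordprod (xs @ ys @ zs)"
    using red by (simp add: wordprod_append)
  then have "length (xs @ ys @ zs) \<le> length (xs @ vs @ zs)"
    using red by blast
  then show "length ys \<le> length vs" by simp
qed

lemma wordprod_rev_eq:
  assumes "wordprod vs = wordprod ws" shows "wordprod (rev vs) = wordprod (rev ws)"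
proof
  fix x
  have "wordprod (rev vs) x = wordprod (rev vs) (wordprod vs (wordprod (rev ws) x))"
    using assms by simp
  then show "wordprod (rev vs) x = wordprod (rev ws) x" by simp
qed

lemma reduced_word_rev: "reduced_word S ws \<Longrightarrow> reduced_word S (rev ws)"
  unfolding reduced_word_iff
proof (intro conjI allI impI)
  assume red: "set ws \<subseteq> S \<and> (\<forall>vs. set vs \<subseteq> S \<and> wordprod vs = wordprod ws \<longrightarrow> length ws \<le> length vs)"
  then show "set (rev ws) \<subseteq> S" by simp
  fix vs assume vs: "set vs \<subseteq> S \<and> wordprod vs = wordprod (rev ws)"
  then have "wordprod (rev vs) = wordprod ws"
    using wordprod_rev_eq[of vs "rev ws"] by simp
  then show "length (rev ws) \<le> length vs"
    using red vs by (metis length_rev set_rev)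
qed

section \<open>The telescoping identity\<close>

lemma sum_telescope_pred:
  "i \<le> n \<Longrightarrow> (\<Sum>k\<in>{i+1..n}. f (k - 1) - f k) = f i - (f (n::nat) :: 'a::ab_group_add)"
  by (induct n) (auto simp: atLeastAtMostSuc_conv le_Suc_eq)

lemma wordprod_take_diff:
  assumes "1 \<le> k" "k \<le> length gs"
  shows "wordprod (take (k - 1) gs) \<omega> - wordprod (take k gs) \<omega> = copair (gs ! (k - 1)) \<omega> *\<^sub>R alpha_seq gs k"
proof -
  have "take k gs = take (k - 1) gs @ [gs ! (k - 1)]"
    using assms take_Suc_conv_app_nth[of "k - 1" gs] by simp
  moreover have "linear (wordprod (take (k - 1) gs))"
    by (simp add: orthogonal_transformation_linear orthogonal_transformation_wordprod)
  ultimately show ?thesis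
    by (simp add: wordprod_append refl_def linear_diff linear_scale alpha_seq_def)
qed

lemma sum_copair_alpha_seq:
  assumes i: "1 \<le> i" "i \<le> length gs"
  shows "(\<Sum>k\<in>{i+1..length gs}. copair (gs ! (k - 1)) \<omega> * copair (alpha_seq gs i) (alpha_seq gs k))
    = copair (gs ! (i - 1)) (wordprod (drop i gs) \<omega>) - copair (gs ! (i - 1)) \<omega>"
proof -
  define W where "W j = wordprod (take j gs)" for j
  define h where "h j = copair (alpha_seq gs i) (W j \<omega>)" for j
  have "copair (gs ! (k - 1)) \<omega> * copair (alpha_seq gs i) (alpha_seq gs k) = h (k - 1) - h k"
    if "k \<in> {i+1..length gs}" for k
  proof -
    have "h (k - 1) - h k = copair (alpha_seq gs i) (W (k - 1) \<omega> - W k \<omega>)"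
      by (simp add: h_def copair_diff)
    then show ?thesis
      using wordprod_take_diff[of k gs \<omega>] that i by (simp add: W_def copair_scaleR)
  qed
  then have "(\<Sum>k\<in>{i+1..length gs}. copair (gs ! (k - 1)) \<omega> * copair (alpha_seq gs i) (alpha_seq gs k))
      = h i - h (length gs)"
    using sum_telescope_pred[OF i(2), of h] by simp
  moreover
  define P where "P = wordprod (take (i - 1) gs)"
  define g where "g = gs ! (i - 1)"
  have take_i: "take i gs = take (i - 1) gs @ [g]" and gs: "gs = take (i - 1) gs @ g # drop i gs"
    using i take_Suc_conv_app_nth[of "i - 1" gs] id_take_nth_drop[of "i - 1" gs] by (simp_all add: g_def)
  have "alpha_seq gs i = P g"
    by (simp add: alpha_seq_def P_def g_def)
  then have "copair (alpha_seq gs i) (P v) = copair g v" for v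
    using copair_orthogonal_transformation[OF orthogonal_transformation_wordprod] by (simp add: P_def)
  then have "h i = - copair g \<omega>" and "h (length gs) = - copair g (wordprod (drop i gs) \<omega>)"
    using take_i arg_cong[OF gs, of wordprod]
    by (simp_all add: h_def W_def P_def wordprod_append copair_refl_self)
  ultimately show ?thesis
    by (simp add: g_def)
qed

lemma sum_copair_alpha_seq_map:
  assumes f: "orthogonal_transformation f" and i: "1 \<le> i" "i \<le> length gs"
  shows "(\<Sum>k\<in>{k\<in>{i+1..length gs}. f (gs ! (k - 1)) = f m}.
            copair (alpha_seq (map f gs) i) (alpha_seq (map f gs) k))
       = (\<Sum>k\<in>{k\<in>{i+1..length gs}. gs ! (k - 1) = m}. copair (alpha_seq gs i) (alpha_seq gs k))"
proof (rule sum.cong)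
  show "{k\<in>{i+1..length gs}. f (gs ! (k - 1)) = f m} = {k\<in>{i+1..length gs}. gs ! (k - 1) = m}"
    using orthogonal_transformation_inj[OF f] by (auto dest: injD)
  fix k assume "k \<in> {k\<in>{i+1..length gs}. gs ! (k - 1) = m}"
  then have "i - 1 < length gs" "k - 1 < length gs"
    using i by auto
  then show "copair (alpha_seq (map f gs) i) (alpha_seq (map f gs) k) = copair (alpha_seq gs i) (alpha_seq gs k)"
    by (simp add: alpha_seq_map[OF f] copair_orthogonal_transformation[OF f])
qed

section \<open>Positive roots and the exchange condition\<close>

locale root_base =
  fixes R S :: "'a::euclidean_space set"
  assumes root_system: "root_system R" and base: "is_base R S"
begin

lemma finite_R: "finite R" and zero_notin_R: "0 \<notin> R" and span_R: "span R = UNIV"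
  and refl_in_R: "a \<in> R \<Longrightarrow> x \<in> R \<Longrightarrow> refl a x \<in> R"
  and copair_R_Ints: "a \<in> R \<Longrightarrow> x \<in> R \<Longrightarrow> copair a x \<in> \<int>"
  and scaleR_in_R: "a \<in> R \<Longrightarrow> c *\<^sub>R a \<in> R \<Longrightarrow> c = 1 \<or> c = -1"
  using root_system by (auto simp: root_system_def)

lemma S_subset_R: "S \<subseteq> R" and independent_S: "independent S"
  and pos_or_neg: "a \<in> R \<Longrightarrow> a \<in> pos_roots R S \<or> - a \<in> pos_roots R S"
  using base by (auto simp: is_base_def)

lemma finite_S: "finite S"
  using S_subset_R finite_R finite_subset by blast

lemma zero_notin_S: "0 \<notin> S"
  using S_subset_R zero_notin_R by blast

lemma pos_roots_subset: "pos_roots R S \<subseteq> R"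
  by (auto simp: pos_roots_def)

lemma minus_in_R: "x \<in> R \<Longrightarrow> - x \<in> R"
  using refl_in_R[of x x] refl_self[of x] zero_notin_R by fastforce

lemma span_S: "span S = UNIV"
proof -
  have "pos_roots R S \<subseteq> span S"
    unfolding pos_roots_def by (auto intro!: span_sum span_scale simp: span_base)
  then have "R \<subseteq> span S"
    using pos_or_neg by (metis minus_minus span_neg subsetD subsetI)
  then show ?thesis
    using span_mono span_R by (metis span_span top.extremum_unique)
qed

lemma sum_representation_S: "(\<Sum>s\<in>S. representation S x s *\<^sub>R s) = x"
  by (simp add: sum_representation_eq independent_S span_S finite_S)

lemma representation_S: "t \<in> S \<Longrightarrow> representation S t s = (if s = t then 1 else 0)"
  by (simp add: representation_basis independent_S)

lemma linear_representation_S: "linear (\<lambda>x. representation S x s)"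
  by (rule linearI) (simp_all add: representation_add representation_scale independent_S span_S)

definition nonneg_coords :: "'a \<Rightarrow> bool" where
  "nonneg_coords x \<longleftrightarrow> (\<forall>s\<in>S. 0 \<le> representation S x s)"

lemma representation_linear_image:
  "linear f \<Longrightarrow> representation S (f x) t = (\<Sum>s\<in>S. representation S x s * representation S (f s) t)"
proof -
  assume f: "linear f"
  have "f x = f (\<Sum>s\<in>S. representation S x s *\<^sub>R s)"
    by (simp only: sum_representation_S)
  also have "\<dots> = (\<Sum>s\<in>S. representation S x s *\<^sub>R f s)"
    by (simp add: linear_sum[OF f] linear_scale[OF f])
  finally show ?thesis
    by (simp add: linear_sum[OF linear_representation_S] linear_scale[OF linear_representation_S])
qed

lemma nonneg_coords_linear_image:
  assumes f: "linear f" and x: "nonneg_coords x"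
    and img: "\<And>s. s \<in> S \<Longrightarrow> representation S x s \<noteq> 0 \<Longrightarrow> nonneg_coords (f s)"
  shows "nonneg_coords (f x)"
  unfolding nonneg_coords_def representation_linear_image[OF f, of x]
proof (intro ballI sum_nonneg)
  fix t s assume "t \<in> S" "s \<in> S"
  then show "0 \<le> representation S x s * representation S (f s) t"
    using x img[of s] by (cases "representation S x s = 0") (auto simp: nonneg_coords_def)
qed

lemma nonneg_coords_antisym: "nonneg_coords x \<Longrightarrow> nonneg_coords (- x) \<Longrightarrow> x = 0"
proof -
  assume x: "nonneg_coords x" "nonneg_coords (- x)"
  have "representation S x s = 0" if "s \<in> S" for s
    using x that
    by (simp add: nonneg_coords_def representation_neg independent_S span_S) (meson order.antisym)
  then show "x = 0"
    using sum_representation_S[of x] by simp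
qed

lemma pos_roots_nonneg_coords: "x \<in> pos_roots R S \<Longrightarrow> nonneg_coords x"
proof -
  assume "x \<in> pos_roots R S"
  then obtain c :: "'a \<Rightarrow> nat" where x: "x = (\<Sum>s\<in>S. real (c s) *\<^sub>R s)"
    by (auto simp: pos_roots_def)
  have "representation S x t = c t" if "t \<in> S" for t
    using that finite_S
    by (simp add: x linear_sum[OF linear_representation_S] linear_scale[OF linear_representation_S]
        representation_S if_distrib[of "(*) _"] cong: if_cong)
  then show ?thesis by (simp add: nonneg_coords_def)
qed

lemma pos_roots_iff: "x \<in> pos_roots R S \<longleftrightarrow> x \<in> R \<and> nonneg_coords x"
proof (intro iffI conjI)
  assume x: "x \<in> R \<and> nonneg_coords x"
  show "x \<in> pos_roots R S"
  proof (rule ccontr)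
    assume "x \<notin> pos_roots R S"
    then have "nonneg_coords (- x)"
      using x pos_or_neg pos_roots_nonneg_coords by blast
    then show False
      using x nonneg_coords_antisym zero_notin_R by blast
  qed
qed (use pos_roots_subset pos_roots_nonneg_coords in blast)+

lemma minus_pos_root_notin: "x \<in> pos_roots R S \<Longrightarrow> - x \<notin> pos_roots R S"
  using pos_roots_nonneg_coords nonneg_coords_antisym pos_roots_subset zero_notin_R by fastforce

lemma S_subset_pos_roots: "S \<subseteq> pos_roots R S"
  using S_subset_R by (auto simp: pos_roots_iff nonneg_coords_def representation_S)

lemma pos_root_eq_simple:
  assumes x: "x \<in> pos_roots R S" and a: "a \<in> S"
    and supp: "\<And>u. u \<in> S \<Longrightarrow> u \<noteq> a \<Longrightarrow> representation S x u = 0"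
  shows "x = a"
proof -
  define c where "c = representation S x a"
  have "x = (\<Sum>u\<in>S. representation S x u *\<^sub>R u)"
    by (rule sum_representation_S[symmetric])
  also have "\<dots> = (\<Sum>u\<in>S. if u = a then c *\<^sub>R u else 0)"
    by (rule sum.cong) (auto simp: c_def supp)
  also have "\<dots> = c *\<^sub>R a"
    using a finite_S by (simp add: sum.delta)
  finally have xa: "x = c *\<^sub>R a" .
  then have "c = 1 \<or> c = -1"
    using x a S_subset_R pos_roots_subset scaleR_in_R by blast
  moreover have "0 \<le> c"
    using pos_roots_nonneg_coords[OF x] a by (simp add: c_def nonneg_coords_def)
  ultimately show ?thesis
    using xa by auto
qed

lemma refl_simple_pos_root:
  assumes a: "a \<in> S" and v: "v \<in> pos_roots R S" and "v \<noteq> a"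
  shows "refl a v \<in> pos_roots R S"
proof (rule ccontr)
  assume "refl a v \<notin> pos_roots R S"
  moreover have "refl a v \<in> R"
    using a v S_subset_R pos_roots_subset refl_in_R by blast
  ultimately have neg: "nonneg_coords (- refl a v)"
    using pos_or_neg pos_roots_nonneg_coords by blast
  have "representation S v u = 0" if u: "u \<in> S" "u \<noteq> a" for u
  proof -
    have "representation S (- refl a v) u = - representation S v u"
      using u a by (simp add: refl_def representation_neg representation_diff representation_scale
          representation_S independent_S span_S)
    moreover have "0 \<le> representation S (- refl a v) u" "0 \<le> representation S v u"
      using neg pos_roots_nonneg_coords[OF v] u(1) by (simp_all add: nonneg_coords_def)
    ultimately show ?thesis
      by linarith
  qed
  then have "v = a"
    using pos_root_eq_simple[OF v a] by blast
  with \<open>v \<noteq> a\<close> show False ..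
qed

lemma wordprod_in_R: "set ws \<subseteq> S \<Longrightarrow> x \<in> R \<Longrightarrow> wordprod ws x \<in> R"
  by (induct ws) (use S_subset_R refl_in_R in auto)

lemma orthogonal_transformation_weyl: "w \<in> weyl S \<Longrightarrow> orthogonal_transformation w"
  by (auto simp: weyl_def orthogonal_transformation_wordprod)

lemma weyl_in_R: "w \<in> weyl S \<Longrightarrow> x \<in> R \<Longrightarrow> w x \<in> R"
  by (auto simp: weyl_def wordprod_in_R)

lemma refl_simple_self: "\<gamma> \<in> S \<Longrightarrow> refl \<gamma> \<gamma> = - \<gamma>"
  using zero_notin_S by (metis refl_self)

lemma wordprod_minus: "wordprod ws (- x) = - wordprod ws x"
  by (simp add: linear_neg orthogonal_transformation_linear[OF orthogonal_transformation_wordprod])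

lemma exists_shorter_word_comp_refl:
  assumes "set ws \<subseteq> S" and \<gamma>: "\<gamma> \<in> S" and "- wordprod ws \<gamma> \<in> pos_roots R S"
  shows "\<exists>vs. set vs \<subseteq> S \<and> length vs + 1 = length ws \<and> wordprod vs = wordprod ws \<circ> refl \<gamma>"
  using assms(1,3)
proof (induct ws)
  case Nil
  have "\<gamma> \<in> pos_roots R S"
    using \<gamma> S_subset_pos_roots by blast
  with Nil show ?case
    using minus_pos_root_notin by simp
next
  case (Cons a ws)
  then have a: "a \<in> S" and ws: "set ws \<subseteq> S" by auto
  show ?case
  proof (cases "- wordprod ws \<gamma> \<in> pos_roots R S")
    case True
    then obtain vs where "set vs \<subseteq> S" "length vs + 1 = length ws" "wordprod vs = wordprod ws \<circ> refl \<gamma>"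
      using Cons.hyps ws by blast
    then show ?thesis
      using a by (intro exI[of _ "a # vs"]) simp
  next
    case False
    then have pos: "wordprod ws \<gamma> \<in> pos_roots R S"
      using pos_or_neg wordprod_in_R[OF ws] \<gamma> S_subset_R by blast
    have "- refl a (wordprod ws \<gamma>) \<in> pos_roots R S"
      using Cons.prems(2) by simp
    then have "refl a (wordprod ws \<gamma>) \<notin> pos_roots R S"
      using minus_pos_root_notin by blast
    then have a_eq: "wordprod ws \<gamma> = a"
      using refl_simple_pos_root[OF a pos] by blast
    have "wordprod ws (refl \<gamma> x) = refl a (wordprod ws x)" for x
      using a_eq by (simp add: refl_orthogonal_transformation[OF orthogonal_transformation_wordprod])
    then have "refl a (wordprod ws (refl \<gamma> x)) = wordprod ws x" for x
      by simp
    with ws show ?thesis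
      by (intro exI[of _ ws]) (simp add: fun_eq_iff)
  qed
qed

lemma wlen_comp_refl_less:
  assumes w: "w \<in> weyl S" and \<gamma>: "\<gamma> \<in> S" and neg: "- w \<gamma> \<in> pos_roots R S"
  shows "wlen S (w \<circ> refl \<gamma>) < wlen S w"
proof -
  obtain ws where ws: "set ws \<subseteq> S" "length ws = wlen S w" "wordprod ws = w"
    using reduced_word_exists[OF w] by (auto simp: reduced_word_def)
  then obtain vs where vs: "set vs \<subseteq> S" "length vs + 1 = length ws" "wordprod vs = w \<circ> refl \<gamma>"
    using exists_shorter_word_comp_refl[OF ws(1) \<gamma>] neg by auto
  then have "wlen S (w \<circ> refl \<gamma>) \<le> length vs"
    using wlen_le[OF vs(1)] by simp
  then show ?thesis
    using vs(2) ws(2) by simp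
qed

lemma reduced_word_snoc_pos_root:
  assumes red: "reduced_word S (ws @ [\<gamma>])"
  shows "wordprod ws \<gamma> \<in> pos_roots R S"
proof (rule ccontr)
  have ws: "set ws \<subseteq> S" and \<gamma>: "\<gamma> \<in> S"
    using red by (auto simp: reduced_word_def)
  assume "wordprod ws \<gamma> \<notin> pos_roots R S"
  then have "- wordprod ws \<gamma> \<in> pos_roots R S"
    using pos_or_neg wordprod_in_R[OF ws] \<gamma> S_subset_R by blast
  then have "wlen S (wordprod ws \<circ> refl \<gamma>) < wlen S (wordprod ws)"
    using wlen_comp_refl_less[OF wordprod_in_weyl[OF ws] \<gamma>] by blast
  also have "\<dots> \<le> length ws"
    using wlen_le[OF ws] .
  finally show False
    using red by (simp add: reduced_word_def wordprod_append)
qed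

lemma weyl_eq_id_if_pos:
  assumes w: "w \<in> weyl S" and pos: "\<forall>\<gamma>\<in>S. w \<gamma> \<in> pos_roots R S"
  shows "w = id"
proof -
  obtain us where us: "reduced_word S us" "wordprod us = w"
    using reduced_word_exists[OF w] by blast
  show ?thesis
  proof (cases us rule: rev_exhaust)
    case Nil
    then show ?thesis using us by simp
  next
    case (snoc us' \<gamma>)
    then have \<gamma>: "\<gamma> \<in> S" and pos': "wordprod us' \<gamma> \<in> pos_roots R S"
      using us reduced_word_snoc_pos_root by (auto simp: reduced_word_def)
    have "w = wordprod us' \<circ> refl \<gamma>"
      using us snoc by (simp add: wordprod_append)
    then have "w \<gamma> = - wordprod us' \<gamma>"
      using \<gamma> by (simp add: refl_simple_self wordprod_minus)
    moreover have "w \<gamma> \<in> pos_roots R S"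
      using pos \<gamma> by blast
    ultimately show ?thesis
      using minus_pos_root_notin[OF pos'] by simp
  qed
qed

section \<open>The longest element and the Weyl involution\<close>

lemma finite_weyl: "finite (weyl S)"
proof -
  have "inj_on (\<lambda>w. restrict w R) (weyl S)"
  proof (rule inj_onI)
    fix v w assume v: "v \<in> weyl S" and w: "w \<in> weyl S" and eq: "restrict v R = restrict w R"
    have lin: "linear v" "linear w"
      using orthogonal_transformation_weyl[OF v] orthogonal_transformation_weyl[OF w]
      by (simp_all add: orthogonal_transformation_linear)
    have "v x = w x" if "x \<in> R" for x
      using fun_cong[OF eq, of x] that by simp
    then have "v x = w x" for x
      using linear_eq_on_span[OF lin, of R x] span_R by simp
    then show "v = w" ..
  qed
  moreover have "(\<lambda>w. restrict w R) ` weyl S \<subseteq> Pi\<^sub>E R (\<lambda>_. R)"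
    using weyl_in_R by auto
  then have "finite ((\<lambda>w. restrict w R) ` weyl S)"
    by (rule finite_subset) (simp add: finite_PiE finite_R)
  ultimately show ?thesis
    using finite_imageD by blast
qed

lemma ex_max_wlen: "\<exists>w\<in>weyl S. \<forall>v\<in>weyl S. wlen S v \<le> wlen S w"
proof -
  have fin: "finite (wlen S ` weyl S)"
    using finite_weyl by (rule finite_imageI)
  moreover have "wlen S ` weyl S \<noteq> {}"
    using wordprod_in_weyl[of "[]"] by auto
  ultimately have "Max (wlen S ` weyl S) \<in> wlen S ` weyl S"
    by (rule Max_in)
  then obtain w where max: "Max (wlen S ` weyl S) = wlen S w" and w: "w \<in> weyl S"
    by (rule imageE)
  have "wlen S v \<le> wlen S w" if "v \<in> weyl S" for v
    unfolding max[symmetric] using that by (intro Max_ge[OF fin]) simp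
  with w show ?thesis
    by blast
qed

lemma max_wlen_neg_simple:
  assumes w: "w \<in> weyl S" and max: "\<forall>v\<in>weyl S. wlen S v \<le> wlen S w" and \<gamma>: "\<gamma> \<in> S"
  shows "- w \<gamma> \<in> pos_roots R S"
proof (rule ccontr)
  assume "- w \<gamma> \<notin> pos_roots R S"
  then have pos: "w \<gamma> \<in> pos_roots R S"
    using pos_or_neg weyl_in_R[OF w] \<gamma> S_subset_R by blast
  obtain ws where ws: "set ws \<subseteq> S" "wordprod ws = w"
    using w by (auto simp: weyl_def)
  define w' where "w' = w \<circ> refl \<gamma>"
  have w': "w' \<in> weyl S"
    using wordprod_in_weyl[of "ws @ [\<gamma>]"] ws \<gamma> by (simp add: w'_def wordprod_append)
  have "- w' \<gamma> \<in> pos_roots R S"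
    using pos \<gamma> orthogonal_transformation_weyl[OF w]
    by (simp add: w'_def refl_simple_self linear_neg orthogonal_transformation_linear)
  then have "wlen S (w' \<circ> refl \<gamma>) < wlen S w'"
    by (rule wlen_comp_refl_less[OF w' \<gamma>])
  moreover have "w' \<circ> refl \<gamma> = w"
    by (simp add: w'_def fun_eq_iff)
  moreover have "wlen S w' \<le> wlen S w"
    using max w' by blast
  ultimately show False
    by simp
qed

lemma neg_simple_imp_neg_pos_roots:
  assumes w: "w \<in> weyl S" and neg: "\<forall>\<gamma>\<in>S. - w \<gamma> \<in> pos_roots R S" and x: "x \<in> pos_roots R S"
  shows "- w x \<in> pos_roots R S"
proof -
  have "linear (\<lambda>x. - w x)"
    using orthogonal_transformation_weyl[OF w]
    by (simp add: linear_compose_neg orthogonal_transformation_linear)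
  then have "nonneg_coords (- w x)"
    using nonneg_coords_linear_image[OF _ pos_roots_nonneg_coords[OF x]] neg pos_roots_nonneg_coords
    by blast
  moreover have "- w x \<in> R"
    using minus_in_R weyl_in_R[OF w] x pos_roots_subset by blast
  ultimately show ?thesis
    by (simp add: pos_roots_iff)
qed

lemma neg_simple_unique:
  assumes w: "w \<in> weyl S" and w': "w' \<in> weyl S"
    and neg: "\<forall>\<gamma>\<in>S. - w \<gamma> \<in> pos_roots R S" and neg': "\<forall>\<gamma>\<in>S. - w' \<gamma> \<in> pos_roots R S"
  shows "w = w'"
proof -
  obtain ws where ws: "set ws \<subseteq> S" "wordprod ws = w"
    using w by (auto simp: weyl_def)
  obtain ws' where ws': "set ws' \<subseteq> S" "wordprod ws' = w'"
    using w' by (auto simp: weyl_def)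
  define v where "v = wordprod (rev ws @ ws')"
  have v: "v \<in> weyl S"
    unfolding v_def using ws ws' by (intro wordprod_in_weyl) auto
  have wv: "w (v x) = w' x" for x
    unfolding ws(2)[symmetric] ws'(2)[symmetric] by (simp add: v_def wordprod_append)
  have "v \<gamma> \<in> pos_roots R S" if \<gamma>: "\<gamma> \<in> S" for \<gamma>
  proof (rule ccontr)
    assume "v \<gamma> \<notin> pos_roots R S"
    then have "- v \<gamma> \<in> pos_roots R S"
      using pos_or_neg weyl_in_R[OF v] \<gamma> S_subset_R by blast
    then have "- w (- v \<gamma>) \<in> pos_roots R S"
      using neg_simple_imp_neg_pos_roots[OF w neg] by blast
    moreover have "- w (- v \<gamma>) = w' \<gamma>"
      using wv orthogonal_transformation_weyl[OF w]
      by (simp add: linear_neg orthogonal_transformation_linear)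
    moreover have "- w' \<gamma> \<in> pos_roots R S"
      using neg' \<gamma> by blast
    ultimately show False
      using minus_pos_root_notin by simp
  qed
  then have "v = id"
    using weyl_eq_id_if_pos[OF v] by blast
  then show ?thesis
    using wv by (auto simp: fun_eq_iff)
qed

lemma longest_neg_simple:
  "longest S \<in> weyl S" "\<gamma> \<in> S \<Longrightarrow> - longest S \<gamma> \<in> pos_roots R S"
proof -
  obtain w where w: "w \<in> weyl S" "\<forall>v\<in>weyl S. wlen S v \<le> wlen S w"
    using ex_max_wlen by blast
  have "longest S = w"
    unfolding longest_def
  proof (rule the_equality)
    fix w' assume w': "w' \<in> weyl S \<and> (\<forall>v\<in>weyl S. wlen S v \<le> wlen S w')"
    show "w' = w"
    proof (rule neg_simple_unique)
      show "\<forall>\<gamma>\<in>S. - w' \<gamma> \<in> pos_roots R S" "\<forall>\<gamma>\<in>S. - w \<gamma> \<in> pos_roots R S"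
        using w w' max_wlen_neg_simple by auto
    qed (use w w' in auto)
  qed (use w in blast)
  then show "longest S \<in> weyl S" "\<gamma> \<in> S \<Longrightarrow> - longest S \<gamma> \<in> pos_roots R S"
    using w max_wlen_neg_simple by auto
qed

lemma orthogonal_transformation_weyl_inv: "orthogonal_transformation (weyl_inv S)"
  using orthogonal_transformation_weyl[OF longest_neg_simple(1)]
  by (simp add: weyl_inv_def[abs_def] orthogonal_transformation_neg)

lemma weyl_inv_pos_root: "x \<in> pos_roots R S \<Longrightarrow> weyl_inv S x \<in> pos_roots R S"
  using neg_simple_imp_neg_pos_roots[OF longest_neg_simple(1)] longest_neg_simple(2)
  by (simp add: weyl_inv_def)

lemma simple_root_in_image:
  assumes f: "linear f" "inj f" and pos: "\<And>x. x \<in> pos_roots R S \<Longrightarrow> f x \<in> pos_roots R S"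
    and \<beta>: "\<beta> \<in> S"
  shows "\<exists>t\<in>S. f t = \<beta>"
proof -
  have "f ` pos_roots R S = pos_roots R S"
    using finite_subset[OF pos_roots_subset finite_R] pos inj_on_subset[OF f(2)]
    by (intro endo_inj_surj) auto
  then obtain \<delta> where \<delta>: "\<delta> \<in> pos_roots R S" and \<beta>_eq: "\<beta> = f \<delta>"
    using \<beta> S_subset_pos_roots by (metis imageE subsetD)
  \<comment> \<open>\<open>\<beta> = \<Sum>\<^sub>s c\<^sub>s f(s)\<close> with \<open>c\<^sub>s \<ge> 0\<close> and every \<open>f(s)\<close> positive, so each \<open>f(s)\<close> with \<open>c\<^sub>s > 0\<close> is a multiple of \<open>\<beta>\<close>\<close>
  have zero: "representation S \<delta> s * representation S (f s) u = 0"
    if s: "s \<in> S" and u: "u \<in> S" "u \<noteq> \<beta>" for s u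
  proof -
    have nonneg: "0 \<le> representation S \<delta> s * representation S (f s) u" if "s \<in> S" for s
      using that u pos_roots_nonneg_coords[OF \<delta>] pos_roots_nonneg_coords[OF pos] S_subset_pos_roots
      by (intro mult_nonneg_nonneg) (auto simp: nonneg_coords_def)
    have "(\<Sum>s\<in>S. representation S \<delta> s * representation S (f s) u) = 0"
      using representation_linear_image[OF f(1), of \<delta> u] u \<beta> by (simp add: \<beta>_eq[symmetric] representation_S)
    then show ?thesis
      using sum_nonneg_eq_0_iff[OF finite_S, of "\<lambda>s. representation S \<delta> s * representation S (f s) u"]
        nonneg s by blast
  qed
  obtain t where t: "t \<in> S" "representation S \<delta> t \<noteq> 0"
  proof (rule ccontr)
    assume "\<not> thesis"
    with that have "\<delta> = 0"
      using sum_representation_S[of \<delta>] by (metis (no_types, lifting) scale_zero_left sum.neutral)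
    then show False
      using \<delta> pos_roots_subset zero_notin_R by blast
  qed
  have "f t = \<beta>"
    using pos_root_eq_simple[OF pos[OF subsetD[OF S_subset_pos_roots t(1)]] \<beta>] zero[OF t(1)] t(2)
    by simp
  with t show ?thesis
    by blast
qed

lemma weyl_inv_simple: "\<beta> \<in> S \<Longrightarrow> \<exists>t\<in>S. weyl_inv S t = \<beta>"
  using orthogonal_transformation_weyl_inv weyl_inv_pos_root
  by (intro simple_root_in_image)
    (simp_all add: orthogonal_transformation_linear orthogonal_transformation_inj)

section \<open>Minuscule weights and minimal coset representatives\<close>

lemma copair_wordprod_Ints:
  assumes \<omega>: "\<forall>a\<in>S. copair a \<omega> \<in> \<int>" and "set ws \<subseteq> S" and "a \<in> S"
  shows "copair a (wordprod ws \<omega>) \<in> \<int>"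
  using assms(2,3)
proof (induct ws arbitrary: a)
  case Nil
  then show ?case using \<omega> by simp
next
  case (Cons h ws)
  have "copair a (wordprod (h # ws) \<omega>) = copair a (wordprod ws \<omega>) - copair h (wordprod ws \<omega>) * copair a h"
    by (simp add: refl_def copair_diff copair_scaleR)
  moreover have "a \<in> R" "h \<in> R"
    using Cons.prems S_subset_R by auto
  then have "copair a h \<in> \<int>"
    by (rule copair_R_Ints)
  ultimately show ?case
    using Cons by auto
qed

lemma copair_eq_sum_representation:
  "copair \<delta> \<omega> = (\<Sum>s\<in>S. representation S \<delta> s * copair s \<omega> * ((s \<bullet> s) / (\<delta> \<bullet> \<delta>)))"
proof -
  have "copair \<delta> \<omega> = 2 * (\<omega> \<bullet> (\<Sum>s\<in>S. representation S \<delta> s *\<^sub>R s)) / (\<delta> \<bullet> \<delta>)"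
    by (simp add: copair_def sum_representation_S)
  also have "\<dots> = (\<Sum>s\<in>S. 2 * (representation S \<delta> s * (\<omega> \<bullet> s)) / (\<delta> \<bullet> \<delta>))"
    by (simp add: inner_sum_right sum_distrib_left sum_divide_distrib)
  also have "\<dots> = (\<Sum>s\<in>S. representation S \<delta> s * copair s \<omega> * ((s \<bullet> s) / (\<delta> \<bullet> \<delta>)))"
    by (rule sum.cong) (use zero_notin_S in \<open>auto simp: copair_def inner_commute\<close>)
  finally show ?thesis .
qed

lemma dominant_copair_pos_root:
  assumes dom: "\<forall>s\<in>S. 0 \<le> copair s \<omega>" and \<delta>: "\<delta> \<in> pos_roots R S"
  shows "0 \<le> copair \<delta> \<omega>"
    and "copair \<delta> \<omega> = 0 \<Longrightarrow> s \<in> S \<Longrightarrow> representation S \<delta> s \<noteq> 0 \<Longrightarrow> copair s \<omega> = 0"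
proof -
  define t where "t s = representation S \<delta> s * copair s \<omega> * ((s \<bullet> s) / (\<delta> \<bullet> \<delta>))" for s
  have sum: "copair \<delta> \<omega> = sum t S"
    unfolding t_def by (rule copair_eq_sum_representation)
  have nonneg: "0 \<le> t s" if "s \<in> S" for s
    using that dom pos_roots_nonneg_coords[OF \<delta>] by (simp add: t_def nonneg_coords_def)
  then show "0 \<le> copair \<delta> \<omega>"
    unfolding sum by (rule sum_nonneg)
  assume "copair \<delta> \<omega> = 0" and s: "s \<in> S" "representation S \<delta> s \<noteq> 0"
  then have "\<forall>s\<in>S. t s = 0"
    using sum_nonneg_eq_0_iff[OF finite_S nonneg] sum by simp
  then have "t s = 0"
    using s(1) by blast
  moreover have "s \<bullet> s \<noteq> 0" "\<delta> \<bullet> \<delta> \<noteq> 0"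
    using s(1) zero_notin_S \<delta> pos_roots_subset zero_notin_R by auto
  ultimately show "copair s \<omega> = 0"
    using s(2) by (simp add: t_def)
qed

lemma min_coset_rep_simple_pos_root:
  assumes \<phi>: "\<phi> \<in> weyl S" and min: "\<forall>u\<in>parabolic_weyl S \<omega>. wlen S \<phi> \<le> wlen S (\<phi> \<circ> u)"
    and s: "s \<in> S" "copair s \<omega> = 0"
  shows "\<phi> s \<in> pos_roots R S"
proof (rule ccontr)
  assume "\<phi> s \<notin> pos_roots R S"
  then have "- \<phi> s \<in> pos_roots R S"
    using pos_or_neg weyl_in_R[OF \<phi>] s(1) S_subset_R by blast
  then have "wlen S (\<phi> \<circ> refl s) < wlen S \<phi>"
    using wlen_comp_refl_less[OF \<phi> s(1)] by blast
  moreover have "refl s \<in> parabolic_weyl S \<omega>"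
    using s wordprod_in_weyl[of "[s]" "{\<gamma> \<in> S. copair \<gamma> \<omega> = 0}"]
    by (simp add: parabolic_weyl_def)
  with min have "wlen S \<phi> \<le> wlen S (\<phi> \<circ> refl s)"
    by blast
  ultimately show False
    by simp
qed

lemma min_coset_rep_pos_root:
  assumes dom: "\<forall>s\<in>S. 0 \<le> copair s \<omega>"
    and \<phi>: "\<phi> \<in> weyl S" and min: "\<forall>u\<in>parabolic_weyl S \<omega>. wlen S \<phi> \<le> wlen S (\<phi> \<circ> u)"
    and \<delta>: "\<delta> \<in> pos_roots R S" "copair \<delta> \<omega> = 0"
  shows "\<phi> \<delta> \<in> pos_roots R S"
proof -
  have "nonneg_coords (\<phi> \<delta>)"
  proof (rule nonneg_coords_linear_image[of \<phi>])
    show "linear \<phi>"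
      using \<phi> by (simp add: orthogonal_transformation_weyl orthogonal_transformation_linear)
    show "nonneg_coords \<delta>"
      using \<delta>(1) by (rule pos_roots_nonneg_coords)
    fix s assume "s \<in> S" "representation S \<delta> s \<noteq> 0"
    then have "\<phi> s \<in> pos_roots R S"
      using min_coset_rep_simple_pos_root[OF \<phi> min] dominant_copair_pos_root(2)[OF dom \<delta>] by blast
    then show "nonneg_coords (\<phi> s)"
      by (rule pos_roots_nonneg_coords)
  qed
  moreover have "\<phi> \<delta> \<in> R"
    using weyl_in_R[OF \<phi>] \<delta>(1) pos_roots_subset by blast
  ultimately show ?thesis
    by (simp add: pos_roots_iff)
qed

lemma minuscule_copair_simple:
  assumes "minuscule R S \<omega>" and "m \<in> S" and "copair m \<omega> = 1"
  shows "\<forall>s\<in>S. copair s \<omega> = (if s = m then 1 else 0)"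
proof -
  obtain \<gamma> where "\<gamma> \<in> S" and \<gamma>: "\<forall>s\<in>S. copair s \<omega> = (if s = \<gamma> then 1 else 0)"
    using assms(1) unfolding minuscule_def fundamental_weight_def by blast
  then have "\<gamma> = m"
    using assms(2,3) by (metis zero_neq_one)
  with \<gamma> show ?thesis
    by simp
qed

lemma copair_reduced_suffix_eq_one:
  assumes min: "minuscule R S \<omega>" and red: "reduced_word S (xs @ g # ys)"
    and coset: "\<forall>u\<in>parabolic_weyl S \<omega>. wlen S (wordprod (xs @ g # ys)) \<le> wlen S (wordprod (xs @ g # ys) \<circ> u)"
  shows "copair g (wordprod ys \<omega>) = 1"
proof -
  obtain m where "m \<in> S" "\<forall>s\<in>S. copair s \<omega> = (if s = m then 1 else 0)"
    using min unfolding minuscule_def fundamental_weight_def by blast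
  then have dom: "\<forall>s\<in>S. 0 \<le> copair s \<omega>" and int: "\<forall>s\<in>S. copair s \<omega> \<in> \<int>"
    by auto
  have xs: "set xs \<subseteq> S" and g: "g \<in> S" and ys: "set ys \<subseteq> S"
    using red by (auto simp: reduced_word_def)
  define \<delta> where "\<delta> = wordprod (rev ys) g"
  have "reduced_word S (g # ys)"
    using reduced_word_infix[of S xs "g # ys" "[]"] red by simp
  then have \<delta>_pos: "\<delta> \<in> pos_roots R S"
    unfolding \<delta>_def using reduced_word_rev reduced_word_snoc_pos_root by fastforce
  have Pg_pos: "wordprod xs g \<in> pos_roots R S"
    using reduced_word_infix[of S "[]" "xs @ [g]" ys] red reduced_word_snoc_pos_root by simp
  have c_eq: "copair g (wordprod ys \<omega>) = copair \<delta> \<omega>"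
    using copair_orthogonal_transformation[OF orthogonal_transformation_wordprod, of ys \<delta> \<omega>]
    by (simp add: \<delta>_def)
  have "copair \<delta> \<omega> \<noteq> 0"
  proof
    assume "copair \<delta> \<omega> = 0"
    then have "wordprod (xs @ g # ys) \<delta> \<in> pos_roots R S"
      using min_coset_rep_pos_root[OF dom _ coset \<delta>_pos] wordprod_in_weyl[of "xs @ g # ys"] xs g ys
      by simp
    moreover have "wordprod (xs @ g # ys) \<delta> = - wordprod xs g"
      using g by (simp add: \<delta>_def wordprod_append refl_simple_self wordprod_minus)
    ultimately show False
      using Pg_pos minus_pos_root_notin by simp
  qed
  moreover have "copair g (wordprod ys \<omega>) \<in> \<int>"
    using copair_wordprod_Ints[OF int ys g] .
  moreover have "0 \<le> copair \<delta> \<omega>"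
    using dominant_copair_pos_root(1)[OF dom \<delta>_pos] .
  moreover have "copair \<delta> \<omega> \<le> 1"
    using min \<delta>_pos by (simp add: minuscule_def)
  ultimately show ?thesis
    using c_eq by (auto elim!: Ints_cases)
qed

lemma sum_copair_alpha_seq_minuscule:
  assumes min: "minuscule R S \<omega>" and m: "m \<in> S" "copair m \<omega> = 1" and red: "reduced_word S gs"
    and coset: "\<forall>u\<in>parabolic_weyl S \<omega>. wlen S (wordprod gs) \<le> wlen S (wordprod gs \<circ> u)"
    and i: "1 \<le> i" "i \<le> length gs"
  shows "(\<Sum>k\<in>{k\<in>{i+1..length gs}. gs ! (k - 1) = m}. copair (alpha_seq gs i) (alpha_seq gs k))
    = (if gs ! (i - 1) \<noteq> m then 1 else 0)"
proof -
  have fw: "\<forall>s\<in>S. copair s \<omega> = (if s = m then 1 else 0)"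
    using minuscule_copair_simple[OF min m] .
  have gs: "set gs \<subseteq> S"
    using red by (simp add: reduced_word_def)
  have split: "gs = take (i - 1) gs @ gs ! (i - 1) # drop i gs"
    using i id_take_nth_drop[of "i - 1" gs] by simp
  have "(\<Sum>k\<in>{k\<in>{i+1..length gs}. gs ! (k - 1) = m}. copair (alpha_seq gs i) (alpha_seq gs k))
      = (\<Sum>k\<in>{i+1..length gs}. copair (gs ! (k - 1)) \<omega> * copair (alpha_seq gs i) (alpha_seq gs k))"
    unfolding sum.inter_filter[OF finite_atLeastAtMost]
  proof (rule sum.cong[OF refl])
    fix k assume "k \<in> {i+1..length gs}"
    then have "gs ! (k - 1) \<in> S"
      using i gs nth_mem[of "k - 1" gs] by auto
    then show "(if gs ! (k - 1) = m then copair (alpha_seq gs i) (alpha_seq gs k) else 0)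
        = copair (gs ! (k - 1)) \<omega> * copair (alpha_seq gs i) (alpha_seq gs k)"
      using fw by simp
  qed
  also have "\<dots> = copair (gs ! (i - 1)) (wordprod (drop i gs) \<omega>) - copair (gs ! (i - 1)) \<omega>"
    using sum_copair_alpha_seq[OF i] .
  also have "copair (gs ! (i - 1)) (wordprod (drop i gs) \<omega>) = 1"
    using copair_reduced_suffix_eq_one[OF min, of "take (i - 1) gs" "gs ! (i - 1)" "drop i gs"]
      red coset split by simp
  also have "copair (gs ! (i - 1)) \<omega> = (if gs ! (i - 1) = m then 1 else 0)"
    using fw gs i by (simp add: subset_iff)
  finally show ?thesis
    by simp
qed

end

theorem mainTheorem5:
  fixes R S :: "'a::euclidean_space set"
    and \<omega> \<beta> :: 'a
    and \<phi> :: "'a \<Rightarrow> 'a"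
    and gs :: "'a list"
  assumes "root_system R" and "is_base R S" and "simply_laced R"
    and "minuscule R S \<omega>"
    and "\<phi> \<in> weyl S"
    and "\<forall>u\<in>parabolic_weyl S \<omega>. wlen S \<phi> \<le> wlen S (\<phi> \<circ> u)"
    and "set gs \<subseteq> S" and "length gs = wlen S \<phi>" and "wordprod gs = \<phi>"
    and "\<beta> \<in> S" and "copair \<beta> (weyl_inv S \<omega>) = 1"
  shows "\<forall>i\<in>{1..length gs}.
     (\<Sum>k\<in>{k\<in>{i+1..length gs}. weyl_inv S (gs ! (k - 1)) = \<beta>}.
        copair (alpha_seq (map (weyl_inv S) gs) i) (alpha_seq (map (weyl_inv S) gs) k))
     = (if weyl_inv S (gs ! (i - 1)) \<noteq> \<beta> then 1 else 0)"
proof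
  interpret root_base R S
    using assms(1,2) by unfold_locales
  fix i assume i: "i \<in> {1..length gs}"
  obtain m where m: "m \<in> S" "weyl_inv S m = \<beta>"
    using weyl_inv_simple[OF assms(10)] by blast
  have "copair m \<omega> = 1"
    using assms(11) m(2) copair_orthogonal_transformation[OF orthogonal_transformation_weyl_inv] by metis
  moreover have "reduced_word S gs"
    using assms(7-9) by (simp add: reduced_word_def)
  ultimately have "(\<Sum>k\<in>{k\<in>{i+1..length gs}. gs ! (k - 1) = m}. copair (alpha_seq gs i) (alpha_seq gs k))
      = (if gs ! (i - 1) \<noteq> m then 1 else 0)"
    using sum_copair_alpha_seq_minuscule[OF assms(4) m(1)] assms(6,9) i by simp
  then show "(\<Sum>k\<in>{k\<in>{i+1..length gs}. weyl_inv S (gs ! (k - 1)) = \<beta>}.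
        copair (alpha_seq (map (weyl_inv S) gs) i) (alpha_seq (map (weyl_inv S) gs) k))
     = (if weyl_inv S (gs ! (i - 1)) \<noteq> \<beta> then 1 else 0)"
    using sum_copair_alpha_seq_map[OF orthogonal_transformation_weyl_inv, of i gs m] i m(2)
      orthogonal_transformation_inj[OF orthogonal_transformation_weyl_inv]
    by (auto dest: injD)
qed

end
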